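(* Let $n\ge 2$ and let $m,p,k$ be integers with $1\le m\le p\le k\le n$ and $p\le n-1$. Then the number of $\alpha\in\mathcal{OCT}_n$ with $h(\alpha)=p$, $f(\alpha)=m$ and $w^+(\alpha)=k$ is $$F(n;p,m,k)=\binom{n-m-1}{n-p-1}.$$
   Context: $X_n=\{1,2,\dots,n\}$ with its usual order; maps are written on the right ($x\alpha$). A map $\alpha:X_n\to X_n$ is order-preserving if $x\le y$ implies $x\alpha\le y\alpha$, and a contraction if $|x\alpha-y\alpha|\le|x-y|$ for all $x,y$. $\mathcal{OCT}_n$ is the set of all order-preserving contractions $X_n\to X_n$ (defined on all of $X_n$). For such $\alpha$: height $h(\alpha)=|\mathrm{Im}\,\alpha|$; right waist $w^+(\alpha)=\max(\mathrm{Im}\,\alpha)$; fix $f(\alpha)=|F(\alpha)|$ where $F(\alpha)=\{x\in X_n:x\alpha=x\}$. *)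

theory Defs
  imports Main
begin

text \<open>Full transformations of X_n = {1..n}, represented as functions nat => nat
  that are 0 outside {1..n} (so that distinct maps are distinct functions).\<close>

definition OCT :: "nat \<Rightarrow> (nat \<Rightarrow> nat) set" where
  "OCT n = {a. (\<forall>x\<in>{1..n}. a x \<in> {1..n})
             \<and> (\<forall>x. x \<notin> {1..n} \<longrightarrow> a x = 0)
             \<and> (\<forall>x\<in>{1..n}. \<forall>y\<in>{1..n}. x \<le> y \<longrightarrow> a x \<le> a y)
             \<and> (\<forall>x\<in>{1..n}. \<forall>y\<in>{1..n}.
                   \<bar>int (a x) - int (a y)\<bar> \<le> \<bar>int x - int y\<bar>)}"

definition height :: "nat \<Rightarrow> (nat \<Rightarrow> nat) \<Rightarrow> nat" where
  "height n a = card (a ` {1..n})"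

definition right_waist :: "nat \<Rightarrow> (nat \<Rightarrow> nat) \<Rightarrow> nat" where
  "right_waist n a = Max (a ` {1..n})"

definition fixset :: "nat \<Rightarrow> (nat \<Rightarrow> nat) \<Rightarrow> nat set" where
  "fixset n a = {x\<in>{1..n}. a x = x}"

definition fix_num :: "nat \<Rightarrow> (nat \<Rightarrow> nat) \<Rightarrow> nat" where
  "fix_num n a = card (fixset n a)"

end

theory Submission
  imports Defs
begin

text \<open>
  An order-preserving contraction of X_n moves by 0 or 1 between consecutive points, so it is
  coded by its value c at 1 and the word w of length n - 1 recording where it steps up. Its
  height is one more than the number of ups and its right waist is c plus that number, so
  prescribing height p and right waist k forces c = k - p + 1 and p - 1 ups, while the point
  i + 1 is fixed exactly when the prefix of w of length i contains c - 1 flat steps. Words of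
  length L with t ups having exactly m prefixes with d flat steps number
  (L - m) choose (t + 1 - m), by recursion on the first letter and Pascal's rule.
\<close>

lemma card_lists_Suc_length:
  "card {w :: bool list. length w = Suc L \<and> P w} =
   card {w. length w = L \<and> P (True # w)} + card {w. length w = L \<and> P (False # w)}"
proof -
  let ?A = "\<lambda>s. {w. length w = L \<and> P (s # w)}"
  have split: "{w. length w = Suc L \<and> P w} = Cons True ` ?A True \<union> Cons False ` ?A False"
  proof (intro equalityI subsetI)
    fix w assume "w \<in> {w. length w = Suc L \<and> P w}"
    then obtain s v where "w = s # v" "length v = L" "P (s # v)"
      by (auto simp: length_Suc_conv)
    then show "w \<in> Cons True ` ?A True \<union> Cons False ` ?A False"
      by (cases s) auto
  qed auto
  have "finite (?A s)" for s
    using finite_lists_length_eq[of "UNIV :: bool set" L] by (rule finite_subset[rotated]) auto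
  then have "card (Cons True ` ?A True \<union> Cons False ` ?A False) = card (?A True) + card (?A False)"
    by (subst card_Un_disjoint) (auto simp: card_image)
  with split show ?thesis
    by simp
qed

lemma card_lists_count_True: "card {w. length w = L \<and> count_list w True = t} = L choose t"
proof (induction L arbitrary: t)
  case 0
  have "{w :: bool list. length w = 0 \<and> count_list w True = t} = (if t = 0 then {[]} else {})"
    by auto
  then show ?case by simp
next
  case (Suc L)
  then show ?case by (cases t) (simp_all add: card_lists_Suc_length)
qed

lemma card_atMost_Suc_Collect:
  "card {i. i \<le> Suc L \<and> Q i} = (if Q 0 then 1 else 0) + card {i. i \<le> L \<and> Q (Suc i)}"
proof -
  have "{i. i \<le> Suc L \<and> Q i} = {i. i = 0 \<and> Q 0} \<union> Suc ` {i. i \<le> L \<and> Q (Suc i)}"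
  proof (intro equalityI subsetI)
    fix i assume "i \<in> {i. i \<le> Suc L \<and> Q i}"
    then show "i \<in> {i. i = 0 \<and> Q 0} \<union> Suc ` {i. i \<le> L \<and> Q (Suc i)}"
      by (cases i) auto
  qed auto
  then show ?thesis
    by (simp add: card_Un_disjoint card_image)
qed

lemma binomial_Suc_diff:
  "m \<le> k \<Longrightarrow> m \<le> L \<Longrightarrow>
    (Suc L - m) choose (Suc k - m) = (L - m choose (k - m)) + (L - m choose (Suc k - m))"
  by (simp add: Suc_diff_le)

definition prefixes_with_falses :: "nat \<Rightarrow> bool list \<Rightarrow> nat" where
  "prefixes_with_falses d w = card {i. i \<le> length w \<and> count_list (take i w) False = d}"

lemma prefixes_with_falses_Nil [simp]: "prefixes_with_falses d [] = (if d = 0 then 1 else 0)"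
  by (simp add: prefixes_with_falses_def)

lemma prefixes_with_falses_Cons [simp]:
  "prefixes_with_falses d (True # w) = (if d = 0 then 1 else 0) + prefixes_with_falses d w"
  "prefixes_with_falses 0 (False # w) = 1"
  "prefixes_with_falses (Suc d) (False # w) = prefixes_with_falses d w"
  by (simp_all add: prefixes_with_falses_def card_atMost_Suc_Collect)

text \<open>The value 0 for m = 0 is part of the statement so that the induction hypothesis also
  covers it; it holds because d + t \<le> L guarantees some prefix with exactly d Falses.\<close>

lemma card_lists_count_True_prefixes_with_falses:
  assumes "d + t \<le> L"
  shows "card {w. length w = L \<and> count_list w True = t \<and> prefixes_with_falses d w = m}
           = (if 1 \<le> m \<and> m \<le> t + 1 then (L - m) choose (t + 1 - m) else 0)"
  using assms
proof (induction L arbitrary: d t m)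
  case 0
  then have "{w :: bool list. length w = 0 \<and> count_list w True = t \<and> prefixes_with_falses d w = m}
      = (if m = 1 then {[]} else {})"
    by auto
  with 0 show ?case by simp
next
  case (Suc L)
  show ?case
  proof (cases d)
    case 0
    show ?thesis
    proof (cases t)
      case 0
      with \<open>d = 0\<close> show ?thesis
        by (cases "m = 1") (simp_all add: card_lists_Suc_length card_lists_count_True)
    next
      case (Suc t')
      show ?thesis
      proof (cases m)
        case 0
        with \<open>d = 0\<close> Suc show ?thesis by (simp add: card_lists_Suc_length)
      next
        case (Suc m')
        with \<open>d = 0\<close> \<open>t = Suc t'\<close> Suc.IH[of 0 t' m'] Suc.prems show ?thesis
          by (cases "m' = 0") (simp_all add: card_lists_Suc_length card_lists_count_True)
      qed
    qed
  next
    case (Suc d')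
    show ?thesis
    proof (cases t)
      case 0
      with Suc Suc.IH[of d' t m] Suc.prems show ?thesis
        by (simp add: card_lists_Suc_length)
    next
      case (Suc t')
      have "card {w. length w = Suc L \<and> count_list w True = t \<and> prefixes_with_falses d w = m}
          = card {w. length w = L \<and> count_list w True = t' \<and> prefixes_with_falses d w = m}
          + card {w. length w = L \<and> count_list w True = t \<and> prefixes_with_falses d' w = m}"
        using \<open>d = Suc d'\<close> \<open>t = Suc t'\<close> by (simp add: card_lists_Suc_length)
      also have "\<dots> = (if 1 \<le> m \<and> m \<le> t' + 1 then (L - m) choose (t' + 1 - m) else 0)
          + (if 1 \<le> m \<and> m \<le> t + 1 then (L - m) choose (t + 1 - m) else 0)"
      proof -
        have "d + t' \<le> L" "d' + t \<le> L"
          using Suc.prems \<open>d = Suc d'\<close> \<open>t = Suc t'\<close> by simp_all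
        then show ?thesis
          by (simp only: Suc.IH)
      qed
      also have "\<dots> = (if 1 \<le> m \<and> m \<le> t + 1 then (Suc L - m) choose (t + 1 - m) else 0)"
      proof -
        have "t \<le> L"
          using Suc.prems \<open>d = Suc d'\<close> by simp
        consider "1 \<le> m" "m \<le> t" | "m = t + 1" | "\<not> (1 \<le> m \<and> m \<le> t + 1)"
          by linarith
        then show ?thesis
        proof cases
          case 1
          then show ?thesis
            using \<open>t \<le> L\<close> \<open>t = Suc t'\<close> binomial_Suc_diff[of m t L] by simp
        next
          case 2
          then show ?thesis
            using \<open>t = Suc t'\<close> by simp
        next
          case 3
          then show ?thesis
            using \<open>t = Suc t'\<close> by auto
        qed
      qed
      finally show ?thesis .
    qed
  qed
qed

lemma count_list_True_add_False: "count_list w True + count_list w False = length w"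
  by (induction w) auto

lemma count_list_take_Suc:
  "i < length w \<Longrightarrow> count_list (take (Suc i) w) y = count_list (take i w) y + (if w ! i = y then 1 else 0)"
  by (simp add: take_Suc_conv_app_nth)

lemma count_list_take_mono: "i \<le> j \<Longrightarrow> count_list (take i w) y \<le> count_list (take j w) y"
  using take_add[of i "j - i" w] by simp

lemma count_list_take_le_add:
  "i \<le> j \<Longrightarrow> count_list (take j w) y + i \<le> count_list (take i w) y + j"
  using take_add[of i "j - i" w] count_le_length[of "take (j - i) (drop i w)" y] by (simp, linarith)

lemma count_list_take_le: "count_list (take i w) y \<le> count_list w y"
  by (metis append_take_drop_id count_list_append le_add1)

lemma ex_take_count_list_eq: "t \<le> count_list w y \<Longrightarrow> \<exists>i \<le> length w. count_list (take i w) y = t"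
proof (induction w arbitrary: t)
  case (Cons s w)
  show ?case
  proof (cases t)
    case (Suc t')
    have "(if s = y then t' else t) \<le> count_list w y"
      using Cons.prems Suc by auto
    then obtain i where "i \<le> length w" "count_list (take i w) y = (if s = y then t' else t)"
      using Cons.IH by blast
    then show ?thesis
      using Suc by (intro exI[of _ "Suc i"]) auto
  qed (auto intro: exI[of _ 0])
qed simp

definition staircase :: "nat \<Rightarrow> nat \<Rightarrow> bool list \<Rightarrow> nat \<Rightarrow> nat" where
  "staircase n c w x = (if x \<in> {1..n} then c + count_list (take (x - 1) w) True else 0)"

lemma staircase_outside: "x \<notin> {1..n} \<Longrightarrow> staircase n c w x = 0"
  unfolding staircase_def by (rule if_not_P)

lemma staircase_in_OCT:
  assumes "length w = n - 1" "1 \<le> c" "c + count_list w True \<le> n"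
  shows "staircase n c w \<in> OCT n"
proof -
  let ?a = "staircase n c w"
  have mono_and_lipschitz: "?a x \<le> ?a y \<and> ?a y + x \<le> ?a x + y"
    if "x \<in> {1..n}" "y \<in> {1..n}" "x \<le> y" for x y
    using that count_list_take_mono[of "x - 1" "y - 1" w True]
      count_list_take_le_add[of "x - 1" "y - 1" w True]
    by (auto simp: staircase_def) linarith
  show ?thesis
    unfolding OCT_def
  proof (intro CollectI conjI ballI allI impI)
    fix x assume "x \<in> {1..n}"
    then show "?a x \<in> {1..n}"
      using assms count_list_take_le[of "x - 1" w True] by (auto simp: staircase_def)
  next
    fix x y assume "x \<in> {1..n}" "y \<in> {1..n}"
    then show "\<bar>int (?a x) - int (?a y)\<bar> \<le> \<bar>int x - int y\<bar>"
      using mono_and_lipschitz[of x y] mono_and_lipschitz[of y x] by (cases "x \<le> y") auto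
  next
    fix x assume "x \<notin> {1..n}"
    then show "?a x = 0"
      by (rule staircase_outside)
  qed (use mono_and_lipschitz in simp)
qed

lemma image_staircase:
  assumes "1 \<le> n" "length w = n - 1"
  shows "staircase n c w ` {1..n} = {c..c + count_list w True}"
proof (intro equalityI subsetI)
  fix v assume "v \<in> staircase n c w ` {1..n}"
  then obtain x where "x \<in> {1..n}" "v = staircase n c w x"
    by blast
  then show "v \<in> {c..c + count_list w True}"
    using count_list_take_le[of "x - 1" w True] by (simp add: staircase_def)
next
  fix v assume "v \<in> {c..c + count_list w True}"
  then have "v - c \<le> count_list w True"
    by auto
  then obtain i where "i \<le> length w" "count_list (take i w) True = v - c"
    by (blast dest: ex_take_count_list_eq)
  then have "Suc i \<in> {1..n}" "v = staircase n c w (Suc i)"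
    using assms \<open>v \<in> _\<close> by (auto simp: staircase_def)
  then show "v \<in> staircase n c w ` {1..n}"
    by (rule rev_image_eqI)
qed

lemma height_staircase:
  assumes "1 \<le> n" "length w = n - 1"
  shows "height n (staircase n c w) = count_list w True + 1"
  using image_staircase[OF assms] by (simp add: height_def)

lemma right_waist_staircase:
  assumes "1 \<le> n" "length w = n - 1"
  shows "right_waist n (staircase n c w) = c + count_list w True"
  using image_staircase[OF assms] by (simp add: right_waist_def) (rule Max_eqI, auto)

lemma fix_num_staircase:
  assumes "1 \<le> n" "length w = n - 1" "1 \<le> c"
  shows "fix_num n (staircase n c w) = prefixes_with_falses (c - 1) w"
proof -
  have fixed_iff: "staircase n c w (Suc i) = Suc i \<longleftrightarrow> count_list (take i w) False = c - 1"
    if "i \<le> length w" for i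
  proof -
    have "Suc i \<in> {1..n}"
      using that assms by auto
    then show ?thesis
      using that assms(3) count_list_True_add_False[of "take i w"] by (simp add: staircase_def) arith
  qed
  have "fixset n (staircase n c w) = Suc ` {i. i \<le> length w \<and> count_list (take i w) False = c - 1}"
  proof (intro equalityI subsetI)
    fix x assume "x \<in> fixset n (staircase n c w)"
    then have "x = Suc (x - 1)" "x - 1 \<le> length w" "staircase n c w (Suc (x - 1)) = Suc (x - 1)"
      using assms by (auto simp: fixset_def)
    then show "x \<in> Suc ` {i. i \<le> length w \<and> count_list (take i w) False = c - 1}"
      using fixed_iff by blast
  next
    fix x assume "x \<in> Suc ` {i. i \<le> length w \<and> count_list (take i w) False = c - 1}"
    then obtain i where "x = Suc i" "i \<le> length w" "count_list (take i w) False = c - 1"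
      by blast
    then show "x \<in> fixset n (staircase n c w)"
      using assms fixed_iff by (simp add: fixset_def)
  qed
  then show ?thesis
    by (simp add: fix_num_def prefixes_with_falses_def card_image)
qed

lemma inj_on_staircase: "inj_on (staircase n c) {w. length w = n - 1}"
proof (rule inj_onI)
  fix w1 w2 assume w1: "w1 \<in> {w. length w = n - 1}" and w2: "w2 \<in> {w. length w = n - 1}"
    and eq: "staircase n c w1 = staircase n c w2"
  have count_eq: "count_list (take j w1) True = count_list (take j w2) True" if "j < n" for j
    using fun_cong[OF eq, of "Suc j"] that by (simp add: staircase_def)
  have "w1 ! i = w2 ! i" if "i < n - 1" for i
  proof -
    have "(if w1 ! i then 1 else 0) = (if w2 ! i then 1 else 0 :: nat)"
      using count_eq[of i] count_eq[of "Suc i"] count_list_take_Suc[of i w1 True]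
        count_list_take_Suc[of i w2 True] that w1 w2
      by simp
    then show ?thesis
      by (simp split: if_splits)
  qed
  with w1 w2 show "w1 = w2"
    by (auto intro: nth_equalityI)
qed

lemma OCT_memD:
  assumes "a \<in> OCT n" "x \<in> {1..n}" "y \<in> {1..n}"
  shows "a x \<in> {1..n}" and "x \<le> y \<Longrightarrow> a x \<le> a y"
    and "\<bar>int (a x) - int (a y)\<bar> \<le> \<bar>int x - int y\<bar>"
  using assms unfolding OCT_def by simp_all

lemma OCT_outside: "a \<in> OCT n \<Longrightarrow> x \<notin> {1..n} \<Longrightarrow> a x = 0"
  unfolding OCT_def by blast

lemma OCT_step:
  assumes "a \<in> OCT n" "1 \<le> x" "x < n"
  shows "a (Suc x) = a x \<or> a (Suc x) = Suc (a x)"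
proof -
  have "x \<in> {1..n}" "Suc x \<in> {1..n}"
    using assms by auto
  from OCT_memD(2,3)[OF assms(1) this] show ?thesis
    by linarith
qed

definition steps :: "nat \<Rightarrow> (nat \<Rightarrow> nat) \<Rightarrow> bool list" where
  "steps n a = map (\<lambda>i. a (i + 2) \<noteq> a (i + 1)) [0..<n - 1]"

lemma length_steps [simp]: "length (steps n a) = n - 1"
  by (simp add: steps_def)

lemma staircase_steps:
  assumes "a \<in> OCT n"
  shows "staircase n (a 1) (steps n a) = a"
proof
  let ?w = "steps n a"
  have a_Suc: "a (Suc i) = a 1 + count_list (take i ?w) True" if "i < n" for i
    using that
  proof (induction i)
    case (Suc i)
    have "i < n - 1"
      using Suc.prems by simp
    then have "?w ! i = (a (i + 2) \<noteq> a (i + 1))"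
      by (simp add: steps_def)
    then show ?case
      using Suc OCT_step[OF assms, of "Suc i"] count_list_take_Suc[of i ?w True] by auto
  qed simp
  fix x
  show "staircase n (a 1) ?w x = a x"
  proof (cases "x \<in> {1..n}")
    case True
    then obtain i where "x = Suc i" "i < n"
      by (cases x) auto
    then show ?thesis
      using a_Suc[of i] by (simp add: staircase_def)
  next
    case False
    then show ?thesis
      by (simp only: staircase_outside[OF False] OCT_outside[OF assms False])
  qed
qed

lemma bij_betw_staircase:
  assumes "1 \<le> n" "1 \<le> c"
  shows "bij_betw (staircase n c) {w. length w = n - 1 \<and> c + count_list w True \<le> n}
           {a \<in> OCT n. a 1 = c}"
proof (rule bij_betw_imageI)
  show "inj_on (staircase n c) {w. length w = n - 1 \<and> c + count_list w True \<le> n}"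
    by (rule inj_on_subset[OF inj_on_staircase]) auto
  show "staircase n c ` {w. length w = n - 1 \<and> c + count_list w True \<le> n} = {a \<in> OCT n. a 1 = c}"
  proof (intro equalityI subsetI)
    fix a assume "a \<in> staircase n c ` {w. length w = n - 1 \<and> c + count_list w True \<le> n}"
    then show "a \<in> {a \<in> OCT n. a 1 = c}"
      using assms staircase_in_OCT by (auto simp: staircase_def)
  next
    fix a assume a: "a \<in> {a \<in> OCT n. a 1 = c}"
    then have a_eq: "a = staircase n c (steps n a)"
      using staircase_steps by auto
    have "a n = c + count_list (steps n a) True"
      using assms fun_cong[OF a_eq, of n] by (simp add: staircase_def)
    moreover have "a n \<le> n"
      using a OCT_memD(1)[of a n n] assms by auto
    ultimately show "a \<in> staircase n c ` {w. length w = n - 1 \<and> c + count_list w True \<le> n}"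
      using a_eq by (intro rev_image_eqI[of "steps n a"]) simp_all
  qed
qed

lemma right_waist_OCT:
  assumes "a \<in> OCT n" "1 \<le> n"
  shows "right_waist n a + 1 = a 1 + height n a"
  using right_waist_staircase[OF assms(2) length_steps, of "a 1" a]
    height_staircase[OF assms(2) length_steps, of "a 1" a]
  unfolding staircase_steps[OF assms(1)] by simp

lemma card_OCT_height_fix_num_right_waist:
  assumes "1 \<le> p" "p \<le> k" "k \<le> n"
  shows "card {a \<in> OCT n. height n a = p \<and> fix_num n a = m \<and> right_waist n a = k}
           = card {w. length w = n - 1 \<and> count_list w True = p - 1 \<and> prefixes_with_falses (k - p) w = m}"
proof -
  define c where "c = k - p + 1"
  have n: "1 \<le> n" and c: "1 \<le> c" and "c - 1 = k - p" "c + p = k + 1"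
    using assms by (simp_all add: c_def)
  let ?stats = "\<lambda>a. height n a = p \<and> fix_num n a = m \<and> right_waist n a = k"
  have "{a \<in> OCT n. ?stats a} = {a \<in> {a \<in> OCT n. a 1 = c}. ?stats a}"
    using right_waist_OCT[OF _ n] assms by (fastforce simp: c_def)
  then have "card {a \<in> OCT n. ?stats a}
      = card {w \<in> {w. length w = n - 1 \<and> c + count_list w True \<le> n}. ?stats (staircase n c w)}"
    using bij_betw_same_card[OF bij_betw_Collect[OF bij_betw_staircase[OF n c]]] by simp
  also have "{w \<in> {w. length w = n - 1 \<and> c + count_list w True \<le> n}. ?stats (staircase n c w)}
      = {w. length w = n - 1 \<and> count_list w True = p - 1 \<and> prefixes_with_falses (k - p) w = m}"
    using assms \<open>c - 1 = k - p\<close> \<open>c + p = k + 1\<close>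
    by (auto simp: height_staircase[OF n] right_waist_staircase[OF n] fix_num_staircase[OF n _ c])
  finally show ?thesis .
qed

theorem proposition2p3:
  fixes n m p k :: nat
  assumes "n \<ge> 2" and "1 \<le> m" and "m \<le> p" and "p \<le> k" and "k \<le> n" and "p \<le> n - 1"
  shows "card {a \<in> OCT n. height n a = p \<and> fix_num n a = m \<and> right_waist n a = k}
           = (n - m - 1) choose (n - p - 1)"
proof -
  have "card {a \<in> OCT n. height n a = p \<and> fix_num n a = m \<and> right_waist n a = k}
      = card {w. length w = n - 1 \<and> count_list w True = p - 1 \<and> prefixes_with_falses (k - p) w = m}"
    using assms by (intro card_OCT_height_fix_num_right_waist) simp_all
  also have "\<dots> = (n - 1 - m) choose (p - m)"
    using card_lists_count_True_prefixes_with_falses[of "k - p" "p - 1" "n - 1" m] assms by simp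
  also have "\<dots> = (n - m - 1) choose (n - p - 1)"
    using binomial_symmetric[of "p - m" "n - m - 1"] assms by simp
  finally show ?thesis .
qed

end
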